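(* Let $\mathcal A\in\mathbb C^{n\times n}$ be nonsingular and positive definite, and suppose $\mathcal A=\mathcal P_1+\mathcal P_2$ with $\mathcal P_1,\mathcal P_2$ positive semidefinite; let $\Sigma$ be Hermitian positive definite. With $\tilde{\mathcal P}_i,\tilde{\mathcal P}_\pm,m_i,\Gamma_{\mathrm{PPS}}$ as in the context, suppose that $\tilde{\mathcal P}_1\tilde{\mathcal P}_2x_\lambda=\tilde{\mathcal P}_2\tilde{\mathcal P}_1x_\lambda$ for all $x_\lambda\in\mathrm{ev}(\tilde{\mathcal P}_+^{-1}\tilde{\mathcal P}_-)$. Then $$\rho(\Gamma_{\mathrm{PPS}})\le\max_{x_\lambda\in\mathrm{ev}(\tilde{\mathcal P}_+^{-1}\tilde{\mathcal P}_-)}\min\{m_1(x_\lambda),m_2(x_\lambda)\}<1.$$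
   Context: A matrix $\mathcal P\in\mathbb C^{n\times n}$ is called positive semidefinite if $\mathcal P+\mathcal P^*$ is Hermitian positive semidefinite, and positive definite if $\mathcal P+\mathcal P^*$ is Hermitian positive definite; $\mathcal P$ need not be Hermitian. $\mathcal I$ is the identity, $\|\cdot\|$ the spectral norm, $\rho(\cdot)$ the spectral radius, and $\mathrm{ev}(M)$ the set of all nonzero eigenvectors of a square matrix $M$; $\Sigma^{1/2}$ is the HPD square root of $\Sigma$. $\Gamma_{\mathrm{PPS}}=(\Sigma+\mathcal P_1)^{-1}(\Sigma-\mathcal P_2)(\Sigma+\mathcal P_2)^{-1}(\Sigma-\mathcal P_1)$; $\tilde{\mathcal P}_i=\Sigma^{-1/2}\mathcal P_i\Sigma^{-1/2}$; $\tilde{\mathcal P}_+=(\mathcal I+\tilde{\mathcal P}_2)(\mathcal I+\tilde{\mathcal P}_1)$; $\tilde{\mathcal P}_-=(\mathcal I-\tilde{\mathcal P}_2)(\mathcal I-\tilde{\mathcal P}_1)$. For square $\mathcal P$ with $\mathcal I+\mathcal P$ invertible, $f(\mathcal P)=\|(\mathcal I+\mathcal P)^{-1}(\mathcal I-\mathcal P)\|$. For $i=1,2$ and $x\neq0$, $m_i(x)=f(\tilde{\mathcal P}_{3-i})\sqrt{\dfrac{x^*(\mathcal I+\tilde{\mathcal P}_i^*\tilde{\mathcal P}_i)x-x^*(\tilde{\mathcal P}_i+\tilde{\mathcal P}_i^* )x}{x^*(\mathcal I+\tilde{\mathcal P}_i^*\tilde{\mathcal P}_i)x+x^*(\tilde{\mathcal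 P}_i+\tilde{\mathcal P}_i^* )x}}$. *)

theory Defs
  imports "HOL-Analysis.Analysis"
begin

definition cmat_adj :: "complex ^'n ^'n \<Rightarrow> complex ^'n ^'n" where
  "cmat_adj A = (\<chi> i j. cnj (A $ j $ i))"

definition qform :: "complex ^'n ^'n \<Rightarrow> complex ^'n \<Rightarrow> complex" where
  "qform M x = (\<Sum>i\<in>UNIV. cnj (x $ i) * (M *v x) $ i)"

definition hermitian :: "complex ^'n ^'n \<Rightarrow> bool" where
  "hermitian M \<longleftrightarrow> cmat_adj M = M"

definition herm_pos_def :: "complex ^'n ^'n \<Rightarrow> bool" where
  "herm_pos_def M \<longleftrightarrow> hermitian M \<and> (\<forall>x. x \<noteq> 0 \<longrightarrow> qform M x \<in> \<real> \<and> 0 < Re (qform M x))"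

definition herm_pos_semidef :: "complex ^'n ^'n \<Rightarrow> bool" where
  "herm_pos_semidef M \<longleftrightarrow> hermitian M \<and> (\<forall>x. qform M x \<in> \<real> \<and> 0 \<le> Re (qform M x))"

text \<open>Paper's (non-Hermitian) notions: P is positive (semi)definite iff P + P^* is HP(S)D.\<close>
definition pos_def :: "complex ^'n ^'n \<Rightarrow> bool" where
  "pos_def P \<longleftrightarrow> herm_pos_def (P + cmat_adj P)"

definition pos_semidef :: "complex ^'n ^'n \<Rightarrow> bool" where
  "pos_semidef P \<longleftrightarrow> herm_pos_semidef (P + cmat_adj P)"

definition hpd_sqrt :: "complex ^'n ^'n \<Rightarrow> complex ^'n ^'n" where
  "hpd_sqrt S = (THE R. herm_pos_def R \<and> R ** R = S)"

definition spec_norm :: "complex ^'n ^'n \<Rightarrow> real" where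
  "spec_norm A = onorm (\<lambda>x. A *v x)"

definition cmat_eigenvalues :: "complex ^'n ^'n \<Rightarrow> complex set" where
  "cmat_eigenvalues M = {l. \<exists>x. x \<noteq> 0 \<and> M *v x = l *s x}"

definition spec_radius :: "complex ^'n ^'n \<Rightarrow> real" where
  "spec_radius M = Sup (cmod ` cmat_eigenvalues M)"

definition ev :: "complex ^'n ^'n \<Rightarrow> (complex ^'n) set" where
  "ev M = {x. x \<noteq> 0 \<and> (\<exists>l. M *v x = l *s x)}"

definition fP :: "complex ^'n ^'n \<Rightarrow> real" where
  "fP P = spec_norm (matrix_inv (mat 1 + P) ** (mat 1 - P))"

text \<open>mfun Q P x = f(Q) * sqrt((x^*(I+P^*P)x - x^*(P+P^*)x) / (x^*(I+P^*P)x + x^*(P+P^*)x));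
  m_i(x) = mfun (tilde P_{3-i}) (tilde P_i) x. The quadratic forms are real (Hermitian matrices).\<close>
definition mfun :: "complex ^'n ^'n \<Rightarrow> complex ^'n ^'n \<Rightarrow> complex ^'n \<Rightarrow> real" where
  "mfun Q P x = fP Q * sqrt (
     (Re (qform (mat 1 + cmat_adj P ** P) x) - Re (qform (P + cmat_adj P) x)) /
     (Re (qform (mat 1 + cmat_adj P ** P) x) + Re (qform (P + cmat_adj P) x)))"

end

(*
  Write R for the Hermitian positive definite square root of Sigma, S = R^-1, and
  Q_i = S P_i S.  Since Sigma +- P_i = R (I +- Q_i) R, the PPS iteration matrix is similar to
  T = ((I + Q_2)(I + Q_1))^-1 (I - Q_2)(I - Q_1), so every eigenvalue lambda of it comes with an
  eigenvector x of T: (I - Q_2)(I - Q_1) x = lambda (I + Q_2)(I + Q_1) x.  Applying the Cayley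
  transform (I + Q_2)^-1 (I - Q_2), of norm f(Q_2), gives
  |lambda| |(I + Q_1) x| <= f(Q_2) |(I - Q_1) x|, which is |lambda| <= m_1(x) because the two
  quadratic forms in m_1 are |(I -+ Q_1) x|^2.  Where Q_1 and Q_2 commute on x the factors can be
  swapped, giving |lambda| <= m_2(x) as well.

  Each Q_i is accretive (Re x^* Q_i x >= 0), so f(Q_i) <= 1 and |(I - Q_i) x| <= |(I + Q_i) x|;
  as Q_1 + Q_2 = S A S is positive definite, the second inequality is strict for some i, whence
  min (m_1, m_2) < 1.  This minimum is scale invariant and continuous away from 0, so it attains
  its maximum on the compact set of unit eigenvectors of T.

  The square root itself comes from the spectral theorem, proved by maximising the Rayleigh
  quotient on invariant subspaces.
*)
theory Submission
  imports Defs "Jordan_Normal_Form.Spectral_Radius"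
begin

section \<open>Existence of eigenvectors\<close>

(* Jordan_Normal_Form is needed only for the next proof; its notation and constants clash with
   the HOL-Analysis matrix vocabulary and are switched off afterwards. *)
no_notation Matrix.vec_index (infixl \<open>$\<close> 100)

lemma ev_nonempty:
  fixes M :: "complex^'n^'n"
  shows "ev M \<noteq> {}"
proof -
  define n where "n = CARD('n)"
  obtain f :: "nat \<Rightarrow> 'n" where f: "bij_betw f {0..<n} UNIV"
    using ex_bij_betw_nat_finite[of "UNIV::'n set"] unfolding n_def by auto
  define g where "g = inv_into {0..<n} f"
  have fg: "f (g k) = k" for k
    using f unfolding g_def bij_betw_def by (simp add: f_inv_into_f)
  have g: "g k < n" for k
    using f inv_into_into[of k f "{0..<n}"] unfolding g_def bij_betw_def by simp
  have gf: "g (f i) = i" if "i < n" for i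
    using f that unfolding g_def bij_betw_def by (simp add: inv_into_f_f)
  define A where "A = Matrix.mat n n (\<lambda>(i, j). M $ f i $ f j)"
  have A: "A \<in> carrier_mat n n" by (simp add: A_def)
  obtain l where "l \<in> spectrum A" using spectrum_non_empty[OF A] by (auto simp: n_def)
  then obtain v where "eigenvector A v l" by (auto simp: spectrum_def eigenvalue_def)
  then have v: "v \<in> carrier_vec n" "v \<noteq> 0\<^sub>v n" "A *\<^sub>v v = l \<cdot>\<^sub>v v"
    using A unfolding eigenvector_def by auto
  define x :: "complex^'n" where "x = (\<chi> k. vec_index v (g k))"
  have x: "x $ f i = vec_index v i" if "i < n" for i
    using that by (simp add: x_def gf)
  have "x \<noteq> 0"
  proof
    assume "x = 0"
    then have "v = 0\<^sub>v n"
      using v(1) x by (intro eq_vecI) (auto simp: vec_eq_iff)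
    with v(2) show False ..
  qed
  moreover have "M *v x = l *s x"
  proof (subst Finite_Cartesian_Product.vec_eq_iff, intro allI)
    fix k
    have "(M *v x) $ k = (\<Sum>j\<in>{0..<n}. M $ k $ f j * x $ f j)"
      unfolding matrix_vector_mult_def by (simp add: sum.reindex_bij_betw[OF f, symmetric])
    also have "\<dots> = vec_index (A *\<^sub>v v) (g k)"
      using v(1) g[of k] by (simp add: A_def scalar_prod_def x fg)
    also have "\<dots> = (l *s x) $ k"
      using v g[of k] by (simp add: x_def)
    finally show "(M *v x) $ k = (l *s x) $ k" .
  qed
  ultimately show ?thesis unfolding ev_def by blast
qed

hide_const (open) Matrix.mat Matrix.vec Matrix.row Matrix.col Matrix.orthogonal VectorSpace.subspace
hide_fact (open) Matrix.vec_eq_iff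

lemma matrix_inv_right: "invertible A \<Longrightarrow> A ** matrix_inv A = mat 1"
  and matrix_inv_left: "invertible A \<Longrightarrow> matrix_inv A ** A = mat 1"
  unfolding invertible_def matrix_inv_def by (metis (mono_tags, lifting) someI_ex)+

lemma invertible_matrix_inv: "invertible A \<Longrightarrow> invertible (matrix_inv A)"
  using matrix_inv_left matrix_inv_right invertible_def by blast

lemma matrix_inv_unique:
  fixes A B :: "'a::field^'n^'n"
  assumes "A ** B = mat 1"
  shows "matrix_inv A = B"
proof -
  have "invertible A"
    using assms invertible_right_inverse by blast
  have "B ** A = mat 1"
    using assms matrix_left_right_inverse by blast
  then have "matrix_inv A = (B ** A) ** matrix_inv A"
    by (simp add: matrix_mul_lid)
  also have "\<dots> = B"
    using \<open>invertible A\<close> by (metis matrix_mul_assoc matrix_inv_right matrix_mul_rid)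
  finally show ?thesis .
qed

lemma invertible_iff_ker:
  fixes A :: "'a::field^'n^'n"
  shows "invertible A \<longleftrightarrow> (\<forall>x. A *v x = 0 \<longrightarrow> x = 0)"
  by (simp add: invertible_left_inverse matrix_left_invertible_ker)

lemma matrix_inv_vec_cancel:
  assumes "invertible A"
  shows "matrix_inv A *v (A *v x) = x" and "A *v (matrix_inv A *v x) = x"
  by (simp_all add: matrix_vector_mul_assoc matrix_inv_left matrix_inv_right assms)

lemma matrix_inv_mult:
  fixes A B :: "'a::field^'n^'n"
  assumes "invertible A" "invertible B"
  shows "matrix_inv (A ** B) = matrix_inv B ** matrix_inv A"
proof (rule matrix_inv_unique)
  have "A ** B ** (matrix_inv B ** matrix_inv A) = A ** (B ** matrix_inv B) ** matrix_inv A"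
    by (simp add: matrix_mul_assoc)
  then show "A ** B ** (matrix_inv B ** matrix_inv A) = mat 1"
    using assms by (simp add: matrix_inv_right)
qed

lemma matrix_inv_congruence:
  fixes R X :: "'a::field^'n^'n"
  assumes "invertible R" "invertible X"
  shows "matrix_inv (R ** X ** R) = matrix_inv R ** matrix_inv X ** matrix_inv R"
  using assms by (simp add: matrix_inv_mult invertible_mult matrix_mul_assoc)

lemma matrix_inv_commute:
  fixes A B :: "'a::field^'n^'n"
  assumes "invertible A" "A ** B = B ** A"
  shows "matrix_inv A ** B = B ** matrix_inv A"
proof -
  have "matrix_inv A ** B = matrix_inv A ** B ** (A ** matrix_inv A)"
    using assms(1) by (simp add: matrix_inv_right matrix_mul_rid)
  also have "\<dots> = (matrix_inv A ** A) ** B ** matrix_inv A"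
    using assms(2) by (metis matrix_mul_assoc)
  also have "\<dots> = B ** matrix_inv A"
    using assms(1) by (simp add: matrix_inv_left matrix_mul_lid)
  finally show ?thesis .
qed

lemma matrix_congruence_add:
  fixes S P1 P2 :: "'a::comm_semiring_1^'n^'n"
  shows "S ** P1 ** S + S ** P2 ** S = S ** (P1 + P2) ** S"
  by (simp add: matrix_eq matrix_vector_mult_add_rdistrib matrix_vector_right_distrib
      flip: matrix_vector_mul_assoc)

lemma matrix_vector_mult_sum: "A *v (\<Sum>u\<in>U. f u) = (\<Sum>u\<in>U. A *v f u)"
  by (induction U rule: infinite_finite_induct) (auto simp: matrix_vector_right_distrib)

lemma matrix_vector_mult_scaleR_complex:
  fixes A :: "complex^'n^'m"
  shows "A *v (c *\<^sub>R x) = c *\<^sub>R (A *v x)"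
  unfolding vec_eq_iff
  by (simp add: matrix_vector_mult_def scaleR_conv_of_real[where 'a=complex]
      sum_distrib_left mult_ac)

lemma norm_smult_complex: "norm (c *s (x::complex^'n)) = cmod c * norm x"
  by (simp add: norm_vec_def L2_set_def norm_mult power_mult_distrib real_sqrt_mult
      flip: sum_distrib_left)

lemma continuous_on_matrix_vector_mult: "continuous_on S (\<lambda>x. (A::complex^'n^'m) *v x)"
  by (rule linear_continuous_on[OF matrix_vector_mul_bounded_linear])

definition cinner :: "complex^'n \<Rightarrow> complex^'n \<Rightarrow> complex" where
  "cinner x y = (\<Sum>i\<in>UNIV. cnj (x $ i) * y $ i)"

lemma qform_eq_cinner: "qform M x = cinner x (M *v x)"
  by (simp add: qform_def cinner_def)

lemma cinner_add_right: "cinner x (y + z) = cinner x y + cinner x z"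
  by (simp add: cinner_def distrib_left sum.distrib)

lemma cinner_diff_right: "cinner x (y - z) = cinner x y - cinner x z"
  by (simp add: cinner_def right_diff_distrib sum_subtractf)

lemma cinner_scale_right: "cinner x (c *s y) = c * cinner x y"
  by (simp add: cinner_def sum_distrib_left mult_ac)

lemma cinner_scaleR_right: "cinner x (c *\<^sub>R y) = of_real c * cinner x y"
  by (simp add: cinner_def scaleR_conv_of_real[where 'a=complex] sum_distrib_left mult_ac)

lemma cinner_scale_left: "cinner (c *s x) y = cnj c * cinner x y"
  by (simp add: cinner_def sum_distrib_left mult_ac)

lemma cinner_zero_right [simp]: "cinner x 0 = 0"
  by (simp add: cinner_def)

lemma cinner_sum_right: "cinner x (\<Sum>u\<in>U. f u) = (\<Sum>u\<in>U. cinner x (f u))"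
  by (induction U rule: infinite_finite_induct) (auto simp: cinner_add_right)

lemma cnj_cinner: "cnj (cinner x y) = cinner y x"
  by (simp add: cinner_def mult.commute)

lemma Re_cinner: "Re (cinner x y) = inner x y"
  by (simp add: cinner_def inner_vec_def inner_complex_def Re_sum)

lemma cinner_self: "cinner x x = of_real ((norm x)\<^sup>2)"
proof -
  have "cinner x x = (\<Sum>i\<in>UNIV. of_real ((cmod (x $ i))\<^sup>2))"
    unfolding cinner_def by (intro sum.cong refl) (metis complex_norm_square mult.commute of_real_power)
  also have "\<dots> = of_real ((norm x)\<^sup>2)"
    by (simp add: norm_vec_def L2_set_def sum_nonneg)
  finally show ?thesis .
qed

lemma cinner_adj: "cinner x (cmat_adj M *v y) = cinner (M *v x) y"
  unfolding cinner_def cmat_adj_def matrix_vector_mult_def cnj_sum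
  by (simp add: sum_distrib_left sum_distrib_right mult_ac) (subst sum.swap, simp add: mult_ac)

lemma cmat_adj_mult: "cmat_adj (A ** B) = cmat_adj B ** cmat_adj A"
  by (simp add: cmat_adj_def vec_eq_iff matrix_matrix_mult_def cnj_sum mult.commute)

lemma cmat_adj_mat_1 [simp]: "cmat_adj (mat 1) = mat 1"
  unfolding cmat_adj_def Finite_Cartesian_Product.mat_def by (simp add: vec_eq_iff fun_eq_iff)

lemma cmat_adj_diff: "cmat_adj (A - B) = cmat_adj A - cmat_adj B"
  by (simp add: cmat_adj_def vec_eq_iff)

lemma hermitian_cinner: "hermitian H \<Longrightarrow> cinner x (H *v y) = cinner (H *v x) y"
  by (metis cinner_adj hermitian_def)

lemma hermitian_inner: "hermitian H \<Longrightarrow> inner x (H *v y) = inner (H *v x) y"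
  by (metis Re_cinner hermitian_cinner)

lemma hermitian_cinner_self_real: "hermitian H \<Longrightarrow> cinner x (H *v x) \<in> \<real>"
  by (metis Reals_cnj_iff cnj_cinner hermitian_cinner)

lemma hermitian_matrix_inv:
  assumes "hermitian R" and "invertible R"
  shows "hermitian (matrix_inv R)"
proof -
  have "R ** cmat_adj (matrix_inv R) = mat 1"
    using assms by (metis cmat_adj_mult cmat_adj_mat_1 hermitian_def matrix_inv_left)
  then show ?thesis
    unfolding hermitian_def by (metis matrix_inv_unique)
qed

lemma cinner_unit_eigenvector: "norm u = 1 \<Longrightarrow> H *v u = \<mu> *s u \<Longrightarrow> cinner u (H *v u) = \<mu>"
  by (simp add: cinner_scale_right cinner_self)

lemma hermitian_eigenvalue_real:
  assumes "hermitian H" "x \<noteq> 0" "H *v x = \<mu> *s x"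
  shows "\<mu> \<in> \<real>"
proof -
  have "cinner x (H *v x) = \<mu> * of_real ((norm x)\<^sup>2)"
    using assms(3) by (simp add: cinner_scale_right cinner_self)
  then have "\<mu> = cinner x (H *v x) / of_real ((norm x)\<^sup>2)"
    using assms(2) by simp
  then show ?thesis
    using hermitian_cinner_self_real[OF assms(1)] by simp
qed

(* A unit vector x is an eigenvector of T iff T x = (x^* T x) x; this description does not
   quantify over the eigenvalue, so the set is evidently closed. *)
lemma compact_unit_eigenvectors:
  fixes T :: "complex^'n^'n"
  shows "compact {x. norm x = 1 \<and> T *v x = cinner x (T *v x) *s x}"
proof -
  have "closed {x. norm x = 1 \<and> T *v x = cinner x (T *v x) *s x}"
    unfolding cinner_def vector_scalar_mult_def
    by (intro closed_Collect_conj closed_Collect_eq continuous_intros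
        continuous_on_matrix_vector_mult)
  moreover have "bounded {x. norm x = 1 \<and> T *v x = cinner x (T *v x) *s x}"
    by (rule bounded_subset[OF bounded_cball[of 0 1]]) auto
  ultimately show ?thesis
    by (simp add: compact_eq_bounded_closed)
qed

lemma ev_attains_max:
  fixes T :: "complex^'n^'n" and g :: "complex^'n \<Rightarrow> real"
  assumes cont: "continuous_on (- {0}) g" and scale: "\<And>c x. c \<noteq> 0 \<Longrightarrow> g (c *\<^sub>R x) = g x"
  shows "\<exists>x0\<in>ev T. \<forall>x\<in>ev T. g x \<le> g x0"
proof -
  define K where "K = {x. norm x = 1 \<and> T *v x = cinner x (T *v x) *s x}"
  have K_ev: "K \<subseteq> ev T"
    unfolding K_def ev_def by auto
  have ev_K: "x /\<^sub>R norm x \<in> K" if x: "x \<in> ev T" for x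
  proof -
    obtain \<mu> where "x \<noteq> 0" "T *v x = \<mu> *s x"
      using x by (auto simp: ev_def)
    then have "T *v (x /\<^sub>R norm x) = \<mu> *s (x /\<^sub>R norm x)"
      by (simp add: matrix_vector_mult_scaleR_complex vec_eq_iff scaleR_conv_of_real[where 'a=complex])
    then show ?thesis
      unfolding K_def using \<open>x \<noteq> 0\<close> cinner_unit_eigenvector[of "x /\<^sub>R norm x" T \<mu>]
      by simp
  qed
  have "compact K"
    unfolding K_def by (rule compact_unit_eigenvectors)
  moreover have "K \<noteq> {}"
    using ev_nonempty[of T] ev_K by blast
  moreover have "continuous_on K g"
    using K_ev unfolding ev_def by (intro continuous_on_subset[OF cont]) auto
  ultimately obtain x0 where "x0 \<in> K" and x0: "\<And>y. y \<in> K \<Longrightarrow> g y \<le> g x0"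
    using continuous_attains_sup by metis
  have "g x \<le> g x0" if "x \<in> ev T" for x
    using x0[OF ev_K[OF that]] scale[of "inverse (norm x)" x] that unfolding ev_def by simp
  then show ?thesis
    using \<open>x0 \<in> K\<close> K_ev by blast
qed

lemma cmat_eigenvalues_similar_subset:
  fixes R T :: "complex^'n^'n"
  assumes "invertible R"
  shows "cmat_eigenvalues (matrix_inv R ** T ** R) \<subseteq> cmat_eigenvalues T"
proof
  fix \<mu> assume "\<mu> \<in> cmat_eigenvalues (matrix_inv R ** T ** R)"
  then obtain y where "y \<noteq> 0" and y: "(matrix_inv R ** T ** R) *v y = \<mu> *s y"
    unfolding cmat_eigenvalues_def by blast
  have "T *v (R *v y) = \<mu> *s (R *v y)"
    using arg_cong[OF y, of "\<lambda>v. R *v v"]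
    by (simp add: matrix_inv_vec_cancel[OF assms] vector_scalar_commute
        flip: matrix_vector_mul_assoc)
  moreover have "R *v y \<noteq> 0"
    using \<open>y \<noteq> 0\<close> assms invertible_iff_ker by blast
  ultimately show "\<mu> \<in> cmat_eigenvalues T"
    unfolding cmat_eigenvalues_def by blast
qed

lemma spec_radius_le:
  fixes M :: "complex^'n^'n"
  assumes "\<And>\<mu>. \<mu> \<in> cmat_eigenvalues M \<Longrightarrow> cmod \<mu> \<le> c"
  shows "spec_radius M \<le> c"
proof -
  have "cmat_eigenvalues M \<noteq> {}"
    using ev_nonempty[of M] unfolding ev_def cmat_eigenvalues_def by blast
  then show ?thesis
    unfolding spec_radius_def using assms by (intro cSup_least) auto
qed

section \<open>Spectral theorem for Hermitian matrices\<close>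

definition corthonormal :: "(complex^'n) set \<Rightarrow> bool" where
  "corthonormal U \<longleftrightarrow> (\<forall>u\<in>U. norm u = 1) \<and> pairwise (\<lambda>u v. cinner u v = 0) U"

definition orthonormal_eigvecs :: "complex^'n^'n \<Rightarrow> (complex^'n) set \<Rightarrow> bool" where
  "orthonormal_eigvecs H U \<longleftrightarrow> corthonormal U \<and> (\<forall>u\<in>U. H *v u = cinner u (H *v u) *s u)"

lemma corthonormal_cinner:
  "corthonormal U \<Longrightarrow> u \<in> U \<Longrightarrow> v \<in> U \<Longrightarrow> cinner u v = (if u = v then 1 else 0)"
  unfolding corthonormal_def pairwise_def by (auto simp: cinner_self)

lemma corthonormal_finite_card:
  fixes U :: "(complex^'n) set"
  assumes "corthonormal U"
  shows "finite U \<and> card U \<le> DIM(complex^'n)"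
proof -
  have "pairwise orthogonal U"
    using assms unfolding corthonormal_def pairwise_def real_inner_class.orthogonal_def
    by (simp flip: Re_cinner)
  moreover have "0 \<notin> U"
    using assms unfolding corthonormal_def by auto
  ultimately have "independent U"
    by (rule pairwise_orthogonal_independent)
  then show ?thesis
    by (rule independent_bound)
qed

lemma cinner_corthonormal_sum:
  assumes "corthonormal U" "finite U" "v \<in> U"
  shows "cinner v (\<Sum>u\<in>U. c u *s u) = c v"
proof -
  have "cinner v (\<Sum>u\<in>U. c u *s u) = (\<Sum>u\<in>U. if u = v then c u else 0)"
    unfolding cinner_sum_right cinner_scale_right
    using assms by (intro sum.cong refl) (auto simp: corthonormal_cinner)
  then show ?thesis
    using assms by simp
qed

lemma corthonormal_sum_cinner:
  assumes "corthonormal U" "finite U" "v \<in> U"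
  shows "(\<Sum>u\<in>U. (c u * cinner u v) *s u) = c v *s v"
proof -
  have "(\<Sum>u\<in>U. (c u * cinner u v) *s u) = (\<Sum>u\<in>U. if u = v then c u *s u else 0)"
    using assms by (intro sum.cong refl) (auto simp: corthonormal_cinner)
  then show ?thesis
    using assms by simp
qed

lemma real_linear_coeff_eq_0:
  fixes a b :: real
  assumes "\<And>t. a * t + b * t\<^sup>2 \<le> 0"
  shows "a = 0"
proof (rule DERIV_local_max)
  show "DERIV (\<lambda>t. a * t + b * t\<^sup>2) 0 :> a"
    by (auto intro!: derivative_eq_intros)
  show "\<forall>t. \<bar>0 - t\<bar> < 1 \<longrightarrow> a * t + b * t\<^sup>2 \<le> a * 0 + b * 0\<^sup>2"
    using assms by simp
qed simp

lemma hermitian_inner_add_scaleR: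
  fixes H :: "complex^'n^'n"
  assumes "hermitian H"
  shows "inner (u + t *\<^sub>R y) (H *v (u + t *\<^sub>R y))
    = inner u (H *v u) + 2 * t * inner y (H *v u) + t\<^sup>2 * inner y (H *v y)"
proof -
  have "inner u (H *v y) = inner y (H *v u)"
    using hermitian_inner[OF assms] by (metis inner_commute)
  then show ?thesis
    by (simp add: matrix_vector_right_distrib matrix_vector_mult_scaleR_complex inner_add_left
        inner_add_right power2_eq_square algebra_simps)
qed

lemma norm_unit_add_scaleR_sq:
  assumes "norm u = 1"
  shows "(norm (u + t *\<^sub>R y))\<^sup>2 = 1 + 2 * t * inner y u + t\<^sup>2 * (norm y)\<^sup>2"
proof -
  have "(norm (u + t *\<^sub>R y))\<^sup>2 = inner u u + 2 * t * inner y u + t\<^sup>2 * inner y y"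
    unfolding power2_norm_eq_inner
    by (simp add: inner_add_left inner_add_right inner_commute[of u y] power2_eq_square algebra_simps)
  then show ?thesis
    using assms by (simp add: dot_square_norm)
qed

lemma rayleigh_maximiser_orthogonal:
  fixes H :: "complex^'n^'n"
  assumes herm: "hermitian H" and W: "subspace W" and u: "u \<in> W" "norm u = 1"
    and max: "\<And>y. y \<in> W \<Longrightarrow> inner y (H *v y) \<le> inner u (H *v u) * (norm y)\<^sup>2"
    and y: "y \<in> W"
  shows "inner y (H *v u - inner u (H *v u) *\<^sub>R u) = 0"
proof -
  define \<mu> where "\<mu> = inner u (H *v u)"
  have "(2 * inner y (H *v u - \<mu> *\<^sub>R u)) * t + (inner y (H *v y) - \<mu> * (norm y)\<^sup>2) * t\<^sup>2 \<le> 0"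
    for t
  proof -
    have "u + t *\<^sub>R y \<in> W"
      using u y W by (simp add: subspace_add subspace_mul)
    then show ?thesis
      using max[of "u + t *\<^sub>R y"] u(2)
      unfolding hermitian_inner_add_scaleR[OF herm] norm_unit_add_scaleR_sq[OF u(2)] \<mu>_def
      by (simp add: inner_diff_right power2_eq_square algebra_simps)
  qed
  then have "2 * inner y (H *v u - \<mu> *\<^sub>R u) = 0"
    by (rule real_linear_coeff_eq_0)
  then show ?thesis
    by (simp add: \<mu>_def)
qed

lemma hermitian_invariant_subspace_eigenvector:
  fixes H :: "complex^'n^'n"
  assumes herm: "hermitian H" and W: "subspace W" and inv: "\<And>x. x \<in> W \<Longrightarrow> H *v x \<in> W"
    and w: "w \<in> W" "w \<noteq> 0"
  shows "\<exists>u\<in>W. norm u = 1 \<and> H *v u = cinner u (H *v u) *s u"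
proof -
  define f where "f x = inner x (H *v x)" for x
  have "compact (W \<inter> sphere 0 1)"
    using closed_subspace[OF W] by (simp add: closed_Int_compact)
  moreover have "w /\<^sub>R norm w \<in> W \<inter> sphere 0 1"
    using w W by (simp add: subspace_mul)
  moreover have "continuous_on (W \<inter> sphere 0 1) f"
    unfolding f_def by (intro continuous_intros continuous_on_matrix_vector_mult)
  ultimately obtain u where u: "u \<in> W" "norm u = 1"
    and umax: "\<And>y. y \<in> W \<inter> sphere 0 1 \<Longrightarrow> f y \<le> f u"
    using continuous_attains_sup[of "W \<inter> sphere 0 1" f] by (metis IntD1 IntD2 empty_iff mem_sphere_0)
  have max: "f y \<le> f u * (norm y)\<^sup>2" if "y \<in> W" for y
  proof (cases "y = 0")
    case False
    have "f (y /\<^sub>R norm y) \<le> f u"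
      using umax that False W by (simp add: subspace_mul)
    then show ?thesis
      using False by (simp add: f_def matrix_vector_mult_scaleR_complex power2_eq_square field_simps)
  qed (simp add: f_def)
  have "H *v u - f u *\<^sub>R u \<in> W"
    using u W inv by (simp add: subspace_diff subspace_mul)
  then have "inner (H *v u - f u *\<^sub>R u) (H *v u - f u *\<^sub>R u) = 0"
    using rayleigh_maximiser_orthogonal[OF herm W u max[unfolded f_def]] by (simp add: f_def)
  then have eig: "H *v u = of_real (f u) *s u"
    by (simp add: vec_eq_iff scaleR_conv_of_real[where 'a=complex])
  then have "H *v u = cinner u (H *v u) *s u"
    unfolding cinner_unit_eigenvector[OF u(2) eig] .
  with u show ?thesis
    by blast
qed

lemma orthonormal_eigvecs_insert:
  assumes "orthonormal_eigvecs H U" "norm w = 1" "H *v w = cinner w (H *v w) *s w"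
    and "\<And>u. u \<in> U \<Longrightarrow> cinner u w = 0"
  shows "orthonormal_eigvecs H (insert w U)"
proof -
  have "cinner w u = 0" if "u \<in> U" for u
    using assms(4)[OF that] by (metis cnj_cinner complex_cnj_zero)
  then show ?thesis
    using assms unfolding orthonormal_eigvecs_def corthonormal_def pairwise_insert by auto
qed

lemma orthonormal_eigvecs_max_card:
  fixes H :: "complex^'n^'n"
  shows "\<exists>U. orthonormal_eigvecs H U \<and> (\<forall>U'. orthonormal_eigvecs H U' \<longrightarrow> card U' \<le> card U)"
proof -
  have "orthonormal_eigvecs H {}"
    by (simp add: orthonormal_eigvecs_def corthonormal_def)
  then obtain k where "\<exists>U. orthonormal_eigvecs H U \<and> card U = k"
    and "\<And>U. orthonormal_eigvecs H U \<Longrightarrow> card U \<le> k"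
    using Nat.ex_has_greatest_nat[of "\<lambda>k. \<exists>U. orthonormal_eigvecs H U \<and> card U = k" 0
        "DIM(complex^'n)"]
    by (metis corthonormal_finite_card orthonormal_eigvecs_def card.empty)
  then show ?thesis
    by blast
qed

lemma subspace_cinner_orthogonal: "subspace {x. \<forall>u\<in>U. cinner u x = 0}"
  unfolding real_vector.subspace_def by (simp add: cinner_add_right cinner_scaleR_right)

lemma orthonormal_eigvecs_orthogonal_invariant:
  assumes "hermitian H" "orthonormal_eigvecs H U" "\<forall>u\<in>U. cinner u x = 0"
  shows "\<forall>u\<in>U. cinner u (H *v x) = 0"
proof
  fix u
  assume "u \<in> U"
  have "cinner u (H *v x) = cinner (H *v u) x"
    by (rule hermitian_cinner[OF assms(1)])
  also have "\<dots> = cnj (cinner u (H *v u)) * cinner u x"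
    using assms(2) \<open>u \<in> U\<close> unfolding orthonormal_eigvecs_def by (metis cinner_scale_left)
  finally show "cinner u (H *v x) = 0"
    using assms(3) \<open>u \<in> U\<close> by simp
qed

lemma hermitian_orthonormal_eigenbasis:
  fixes H :: "complex^'n^'n"
  assumes herm: "hermitian H"
  shows "\<exists>U. orthonormal_eigvecs H U \<and> finite U \<and> (\<forall>v. (\<Sum>u\<in>U. cinner u v *s u) = v)"
proof -
  obtain U where U: "orthonormal_eigvecs H U"
    and max: "\<And>U'. orthonormal_eigvecs H U' \<Longrightarrow> card U' \<le> card U"
    using orthonormal_eigvecs_max_card by blast
  have fin: "finite U"
    using U corthonormal_finite_card unfolding orthonormal_eigvecs_def by blast
  define W where "W = {x. \<forall>u\<in>U. cinner u x = 0}"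
  have W: "subspace W"
    unfolding W_def by (rule subspace_cinner_orthogonal)
  have W_inv: "H *v x \<in> W" if "x \<in> W" for x
    using orthonormal_eigvecs_orthogonal_invariant[OF herm U] that unfolding W_def by blast
  have W_0: "x = 0" if "x \<in> W" for x
  proof (rule ccontr)
    assume "x \<noteq> 0"
    then obtain w where w: "w \<in> W" "norm w = 1" "H *v w = cinner w (H *v w) *s w"
      using hermitian_invariant_subspace_eigenvector[OF herm W W_inv \<open>x \<in> W\<close>] by blast
    then have "orthonormal_eigvecs H (insert w U)"
      using U unfolding W_def by (intro orthonormal_eigvecs_insert) auto
    moreover have "w \<notin> U"
      using w unfolding W_def by (auto simp: cinner_self)
    ultimately show False
      using max[of "insert w U"] fin by simp
  qed
  have "v - (\<Sum>u\<in>U. cinner u v *s u) \<in> W" for v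
    using U fin unfolding W_def orthonormal_eigvecs_def
    by (simp add: cinner_diff_right cinner_corthonormal_sum)
  then show ?thesis
    using U fin W_0 by (metis eq_iff_diff_eq_0)
qed

definition spectral_matrix :: "(complex^'n) set \<Rightarrow> (complex^'n \<Rightarrow> complex) \<Rightarrow> complex^'n^'n" where
  "spectral_matrix U c = (\<chi> i j. \<Sum>u\<in>U. c u * u $ i * cnj (u $ j))"

lemma spectral_matrix_cong:
  "(\<And>u. u \<in> U \<Longrightarrow> c u = d u) \<Longrightarrow> spectral_matrix U c = spectral_matrix U d"
  unfolding spectral_matrix_def by (simp cong: sum.cong)

lemma spectral_matrix_mult_vec: "spectral_matrix U c *v v = (\<Sum>u\<in>U. (c u * cinner u v) *s u)"
  unfolding spectral_matrix_def cinner_def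
  by (simp add: vec_eq_iff matrix_vector_mult_def sum_distrib_left sum_distrib_right mult_ac)
    (subst sum.swap, simp add: mult_ac)

lemma spectral_matrix_mult:
  assumes "corthonormal U" "finite U"
  shows "spectral_matrix U c ** spectral_matrix U d = spectral_matrix U (\<lambda>u. c u * d u)"
proof (subst matrix_eq, intro allI)
  fix v
  have "(spectral_matrix U c ** spectral_matrix U d) *v v
      = (\<Sum>u\<in>U. (d u * cinner u v) *s (spectral_matrix U c *v u))"
    by (simp flip: matrix_vector_mul_assoc
        add: spectral_matrix_mult_vec[of U d] matrix_vector_mult_sum vector_scalar_commute)
  also have "\<dots> = (\<Sum>u\<in>U. (c u * d u * cinner u v) *s u)"
    using assms
    by (intro sum.cong refl) (simp add: spectral_matrix_mult_vec corthonormal_sum_cinner mult_ac)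
  also have "\<dots> = spectral_matrix U (\<lambda>u. c u * d u) *v v"
    by (simp add: spectral_matrix_mult_vec)
  finally show "(spectral_matrix U c ** spectral_matrix U d) *v v
      = spectral_matrix U (\<lambda>u. c u * d u) *v v" .
qed

lemma hermitian_spectral_matrix:
  assumes "\<And>u. u \<in> U \<Longrightarrow> c u \<in> \<real>"
  shows "hermitian (spectral_matrix U c)"
proof -
  have "cnj (c u) = c u" if "u \<in> U" for u
    using assms[OF that] by (simp add: Reals_cnj_iff)
  then show ?thesis
    unfolding hermitian_def cmat_adj_def spectral_matrix_def
    by (simp add: vec_eq_iff cnj_sum mult_ac cong: sum.cong)
qed

lemma cinner_spectral_matrix:
  "cinner x (spectral_matrix U c *v x) = (\<Sum>u\<in>U. c u * of_real ((cmod (cinner u x))\<^sup>2))"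
  unfolding spectral_matrix_mult_vec cinner_sum_right cinner_scale_right
proof (intro sum.cong refl)
  fix u
  have "cinner x u = cnj (cinner u x)"
    by (simp add: cnj_cinner)
  then show "c u * cinner u x * cinner x u = c u * of_real ((cmod (cinner u x))\<^sup>2)"
    by (simp add: mult.assoc flip: complex_norm_square)
qed

lemma hermitian_eq_spectral_matrix:
  assumes "orthonormal_eigvecs H U" "finite U" "\<And>v. (\<Sum>u\<in>U. cinner u v *s u) = v"
  shows "H = spectral_matrix U (\<lambda>u. cinner u (H *v u))"
proof (subst matrix_eq, intro allI)
  fix v
  have "H *v v = (\<Sum>u\<in>U. cinner u v *s (H *v u))"
    by (subst (1) assms(3)[of v, symmetric]) (simp add: matrix_vector_mult_sum vector_scalar_commute)
  also have "\<dots> = spectral_matrix U (\<lambda>u. cinner u (H *v u)) *v v"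
    using assms(1) unfolding spectral_matrix_mult_vec orthonormal_eigvecs_def
    by (intro sum.cong refl) (metis mult.commute vector_smult_assoc)
  finally show "H *v v = spectral_matrix U (\<lambda>u. cinner u (H *v u)) *v v" .
qed

lemma hermitian_eq_0_if_eigenvalues_0:
  fixes D :: "complex^'n^'n"
  assumes "hermitian D" and eig0: "\<And>x \<mu>. x \<noteq> 0 \<Longrightarrow> D *v x = \<mu> *s x \<Longrightarrow> \<mu> = 0"
  shows "D = 0"
proof -
  obtain U where U: "orthonormal_eigvecs D U" "finite U" "\<And>v. (\<Sum>u\<in>U. cinner u v *s u) = v"
    using hermitian_orthonormal_eigenbasis[OF assms(1)] by blast
  have "cinner u (D *v u) = 0" if "u \<in> U" for u
    using U(1) that unfolding orthonormal_eigvecs_def corthonormal_def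
    by (metis eig0 norm_zero zero_neq_one)
  then have "D = spectral_matrix U (\<lambda>_. 0)"
    using hermitian_eq_spectral_matrix[OF U] by (simp cong: sum.cong add: spectral_matrix_def)
  then show ?thesis
    by (simp add: spectral_matrix_def vec_eq_iff)
qed

section \<open>The Hermitian positive definite square root\<close>

lemma herm_pos_def_invertible:
  assumes "herm_pos_def R"
  shows "invertible R"
  unfolding invertible_iff_ker
  using assms unfolding herm_pos_def_def qform_eq_cinner by fastforce

lemma herm_pos_def_spectral_matrix:
  fixes U :: "(complex^'n) set"
  assumes "finite U" and span: "\<And>v. (\<Sum>u\<in>U. cinner u v *s u) = v"
    and pos: "\<And>u. u \<in> U \<Longrightarrow> 0 < e u"
  shows "herm_pos_def (spectral_matrix U (\<lambda>u. of_real (e u)))"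
  unfolding herm_pos_def_def
proof (intro conjI allI impI)
  show herm: "hermitian (spectral_matrix U (\<lambda>u. of_real (e u)))"
    by (rule hermitian_spectral_matrix) simp
  fix x :: "complex^'n"
  assume "x \<noteq> 0"
  show "qform (spectral_matrix U (\<lambda>u. of_real (e u))) x \<in> \<real>"
    unfolding qform_eq_cinner by (rule hermitian_cinner_self_real[OF herm])
  obtain u where u: "u \<in> U" "cinner u x \<noteq> 0"
    using span[of x] \<open>x \<noteq> 0\<close> by (metis (no_types, lifting) sum.neutral vector_smult_lzero)
  have "0 < (\<Sum>u\<in>U. e u * (cmod (cinner u x))\<^sup>2)"
    using u pos by (intro sum_pos2[OF assms(1) u(1)]) (auto simp: pos[THEN less_imp_le])
  then show "0 < Re (qform (spectral_matrix U (\<lambda>u. of_real (e u))) x)"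
    unfolding qform_eq_cinner cinner_spectral_matrix by (simp add: Re_sum)
qed

lemma herm_pos_def_sqrt_exists:
  fixes H :: "complex^'n^'n"
  assumes "herm_pos_def H"
  shows "\<exists>R. herm_pos_def R \<and> R ** R = H"
proof -
  have herm: "hermitian H"
    using assms unfolding herm_pos_def_def by blast
  obtain U where U: "orthonormal_eigvecs H U" "finite U" and span: "\<And>v. (\<Sum>u\<in>U. cinner u v *s u) = v"
    using hermitian_orthonormal_eigenbasis[OF herm] by blast
  define e where "e u = Re (cinner u (H *v u))" for u
  have e_real: "cinner u (H *v u) = of_real (e u)" for u
    unfolding e_def using hermitian_cinner_self_real[OF herm] by simp
  have e_pos: "0 < e u" if "u \<in> U" for u
  proof -
    have "u \<noteq> 0"
      using U(1) that unfolding orthonormal_eigvecs_def corthonormal_def by auto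
    then show ?thesis
      using assms unfolding e_def herm_pos_def_def qform_eq_cinner by blast
  qed
  define R where "R = spectral_matrix U (\<lambda>u. of_real (sqrt (e u)))"
  have "R ** R = spectral_matrix U (\<lambda>u. of_real (sqrt (e u)) * of_real (sqrt (e u)))"
    using U unfolding R_def orthonormal_eigvecs_def by (intro spectral_matrix_mult) auto
  also have "\<dots> = spectral_matrix U (\<lambda>u. of_real (e u))"
    by (intro spectral_matrix_cong) (simp add: e_pos abs_of_pos flip: of_real_mult)
  also have "\<dots> = H"
    using hermitian_eq_spectral_matrix[OF U span] by (simp add: e_real)
  finally have "R ** R = H" .
  moreover have "herm_pos_def R"
    unfolding R_def using U(2) span e_pos by (intro herm_pos_def_spectral_matrix) auto
  ultimately show ?thesis
    by blast
qed

lemma herm_pos_def_sqrt_unique: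
  assumes R1: "herm_pos_def R1" and R2: "herm_pos_def R2" and eq: "R1 ** R1 = R2 ** R2"
  shows "R1 = R2"
proof -
  (* D = R1 - R2 satisfies R1 D + D R2 = 0; on an eigenvector x of D with (real) eigenvalue mu
     this gives mu (x^* R1 x + x^* R2 x) = 0. *)
  define D where "D = R1 - R2"
  have herm_D: "hermitian D"
    using R1 R2 unfolding D_def herm_pos_def_def hermitian_def by (simp add: cmat_adj_diff)
  have "\<mu> = 0" if "x \<noteq> 0" "D *v x = \<mu> *s x" for x \<mu>
  proof -
    have "R1 *v (R1 *v x) = R2 *v (R2 *v x)"
      using eq by (simp add: matrix_vector_mul_assoc)
    then have "R1 *v (D *v x) + D *v (R2 *v x) = 0"
      unfolding D_def by (simp add: matrix_vector_mult_diff_rdistrib matrix_vector_mult_diff_distrib)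
    then have "0 = cinner x (R1 *v (D *v x)) + cinner (D *v x) (R2 *v x)"
      by (metis cinner_add_right cinner_zero_right hermitian_cinner[OF herm_D])
    also have "\<dots> = \<mu> * (cinner x (R1 *v x) + cinner x (R2 *v x))"
      using that(2) hermitian_eigenvalue_real[OF herm_D that]
      by (simp add: vector_scalar_commute cinner_scale_right cinner_scale_left Reals_cnj_iff
          distrib_left)
    finally have "\<mu> = 0 \<or> cinner x (R1 *v x) + cinner x (R2 *v x) = 0"
      by simp
    moreover have "cinner x (R1 *v x) + cinner x (R2 *v x) \<noteq> 0"
    proof -
      have "0 < Re (cinner x (R1 *v x) + cinner x (R2 *v x))"
        using R1 R2 \<open>x \<noteq> 0\<close> unfolding herm_pos_def_def qform_eq_cinner
        by (simp add: add_pos_pos)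
      then show ?thesis
        by (metis less_irrefl zero_complex.sel(1))
    qed
    ultimately show "\<mu> = 0"
      by blast
  qed
  then have "D = 0"
    by (rule hermitian_eq_0_if_eigenvalues_0[OF herm_D])
  then show ?thesis
    unfolding D_def by simp
qed

lemma hpd_sqrt:
  assumes "herm_pos_def S"
  shows "herm_pos_def (hpd_sqrt S)" and "hpd_sqrt S ** hpd_sqrt S = S"
proof -
  have "\<exists>!R. herm_pos_def R \<and> R ** R = S"
    using herm_pos_def_sqrt_exists[OF assms] herm_pos_def_sqrt_unique by metis
  then have "herm_pos_def (hpd_sqrt S) \<and> hpd_sqrt S ** hpd_sqrt S = S"
    unfolding hpd_sqrt_def by (rule theI')
  then show "herm_pos_def (hpd_sqrt S)" and "hpd_sqrt S ** hpd_sqrt S = S"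
    by auto
qed

lemma hpd_sqrt_inverse:
  assumes "herm_pos_def \<Sigma>"
  shows "hermitian (matrix_inv (hpd_sqrt \<Sigma>))" and "invertible (matrix_inv (hpd_sqrt \<Sigma>))"
  using hpd_sqrt[OF assms] herm_pos_def_invertible hermitian_matrix_inv invertible_matrix_inv
  unfolding herm_pos_def_def by auto

lemma congruence_by_sqrt:
  fixes R P :: "complex^'n^'n"
  assumes "invertible R"
  shows "R ** R + P = R ** (mat 1 + matrix_inv R ** P ** matrix_inv R) ** R"
    and "R ** R - P = R ** (mat 1 - matrix_inv R ** P ** matrix_inv R) ** R"
  by (simp_all add: matrix_eq matrix_vector_mult_add_rdistrib matrix_vector_mult_diff_rdistrib
      matrix_vector_right_distrib matrix_vector_mult_diff_distrib matrix_inv_vec_cancel[OF assms]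
      flip: matrix_vector_mul_assoc)

section \<open>Accretive matrices and their Cayley transforms\<close>

(* inner is the real part of the complex inner product, so this says Re (x^* P x) >= 0,
   i.e. that P + P^* is positive semidefinite. *)
definition accretive :: "complex^'n^'n \<Rightarrow> bool" where
  "accretive P \<longleftrightarrow> (\<forall>x. 0 \<le> inner x (P *v x))"

lemma Re_qform_add_adj:
  fixes P :: "complex^'n^'n"
  shows "Re (qform (P + cmat_adj P) x) = 2 * inner x (P *v x)"
proof -
  have "qform (P + cmat_adj P) x = cinner x (P *v x) + cnj (cinner x (P *v x))"
    by (simp add: qform_eq_cinner matrix_vector_mult_add_rdistrib cinner_add_right cinner_adj
        cnj_cinner)
  then show ?thesis
    by (simp add: Re_cinner)
qed

lemma pos_semidef_imp_accretive: "pos_semidef P \<Longrightarrow> accretive P"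
  unfolding pos_semidef_def herm_pos_semidef_def accretive_def Re_qform_add_adj by simp

lemma pos_def_inner_pos:
  fixes A :: "complex^'n^'n"
  assumes "pos_def A" "x \<noteq> 0"
  shows "0 < inner x (A *v x)"
proof -
  have "0 < Re (qform (A + cmat_adj A) x)"
    using assms unfolding pos_def_def herm_pos_def_def by blast
  then show ?thesis
    by (simp add: Re_qform_add_adj)
qed

lemma inner_congruence:
  "hermitian S \<Longrightarrow> inner x ((S ** P ** S) *v x) = inner (S *v x) (P *v (S *v x))"
  by (simp add: hermitian_inner flip: matrix_vector_mul_assoc)

lemma accretive_congruence: "hermitian S \<Longrightarrow> accretive P \<Longrightarrow> accretive (S ** P ** S)"
  unfolding accretive_def by (simp add: inner_congruence)

lemma pos_def_congruence:
  fixes S A :: "complex^'n^'n"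
  assumes "pos_def A" "hermitian S" "invertible S" "x \<noteq> 0"
  shows "0 < inner x ((S ** A ** S) *v x)"
proof -
  have "S *v x \<noteq> 0"
    using assms(3,4) invertible_iff_ker by blast
  with assms(1) show ?thesis
    unfolding inner_congruence[OF assms(2)] by (rule pos_def_inner_pos)
qed

lemma norm_id_add_sq:
  fixes P :: "complex^'n^'n"
  shows "(norm ((mat 1 + P) *v x))\<^sup>2 = (norm x)\<^sup>2 + (norm (P *v x))\<^sup>2 + 2 * inner x (P *v x)"
proof -
  have "(mat 1 + P) *v x = x + P *v x"
    by (simp add: matrix_vector_mult_add_rdistrib)
  then show ?thesis
    by (simp add: power2_norm_eq_inner inner_add_left inner_add_right inner_commute[of "P *v x" x])
qed

lemma norm_id_diff_sq:
  fixes P :: "complex^'n^'n"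
  shows "(norm ((mat 1 - P) *v x))\<^sup>2 = (norm x)\<^sup>2 + (norm (P *v x))\<^sup>2 - 2 * inner x (P *v x)"
proof -
  have "(mat 1 - P) *v x = x - P *v x"
    by (simp add: matrix_vector_mult_diff_rdistrib)
  then show ?thesis
    by (simp add: power2_norm_eq_inner inner_diff_left inner_diff_right inner_commute[of "P *v x" x])
qed

lemma mfun_eq_norm_ratio:
  fixes P :: "complex^'n^'n"
  shows "mfun Q P x = fP Q * (norm ((mat 1 - P) *v x) / norm ((mat 1 + P) *v x))"
proof -
  have "Re (qform (mat 1 + cmat_adj P ** P) x) = (norm x)\<^sup>2 + (norm (P *v x))\<^sup>2"
    by (simp add: qform_eq_cinner matrix_vector_mult_add_rdistrib cinner_add_right cinner_adj
        Re_cinner power2_norm_eq_inner flip: matrix_vector_mul_assoc)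
  then show ?thesis
    unfolding mfun_def Re_qform_add_adj
    by (simp flip: norm_id_add_sq norm_id_diff_sq add: real_sqrt_divide)
qed

lemma mfun_scaleR: "c \<noteq> 0 \<Longrightarrow> mfun Q P (c *\<^sub>R x) = mfun Q P x"
  by (simp add: mfun_eq_norm_ratio matrix_vector_mult_scaleR_complex)

lemma accretive_id_add_eq_0:
  assumes "accretive P" "(mat 1 + P) *v x = 0"
  shows "x = 0"
proof -
  have "(norm x)\<^sup>2 \<le> (norm ((mat 1 + P) *v x))\<^sup>2"
    using assms(1) unfolding norm_id_add_sq accretive_def by (simp add: add_increasing2)
  then show ?thesis
    using assms(2) by simp
qed

lemma invertible_id_add: "accretive P \<Longrightarrow> invertible (mat 1 + P)"
  unfolding invertible_iff_ker using accretive_id_add_eq_0 by blast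

lemma norm_id_diff_le:
  assumes "accretive P"
  shows "norm ((mat 1 - P) *v x) \<le> norm ((mat 1 + P) *v x)"
proof -
  have "(norm ((mat 1 - P) *v x))\<^sup>2 \<le> (norm ((mat 1 + P) *v x))\<^sup>2"
    using assms unfolding norm_id_add_sq norm_id_diff_sq accretive_def by simp
  then show ?thesis
    by (rule power2_le_imp_le) simp
qed

lemma norm_id_diff_less:
  fixes P :: "complex^'n^'n"
  assumes "0 < inner x (P *v x)"
  shows "norm ((mat 1 - P) *v x) < norm ((mat 1 + P) *v x)"
proof -
  have "(norm ((mat 1 - P) *v x))\<^sup>2 < (norm ((mat 1 + P) *v x))\<^sup>2"
    using assms unfolding norm_id_add_sq norm_id_diff_sq by simp
  then show ?thesis
    by (rule power2_less_imp_less) simp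
qed

lemma id_diff_id_add_commute:
  fixes P :: "complex^'n^'n"
  shows "(mat 1 - P) ** (mat 1 + P) = (mat 1 + P) ** (mat 1 - P)"
  unfolding matrix_eq
  by (simp flip: matrix_vector_mul_assoc add: matrix_vector_mult_add_rdistrib
      matrix_vector_mult_diff_rdistrib matrix_vector_right_distrib matrix_vector_mult_diff_distrib)

lemma norm_cayley_le: "norm ((matrix_inv (mat 1 + P) ** (mat 1 - P)) *v x) \<le> fP P * norm x"
  unfolding fP_def spec_norm_def by (rule onorm[OF matrix_vector_mul_bounded_linear])

lemma fP_le_1:
  fixes P :: "complex^'n^'n"
  assumes "accretive P"
  shows "fP P \<le> 1"
  unfolding fP_def spec_norm_def
proof (rule onorm_le)
  fix x :: "complex^'n"
  have inv: "invertible (mat 1 + P)"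
    using assms by (rule invertible_id_add)
  define y where "y = matrix_inv (mat 1 + P) *v x"
  have x: "x = (mat 1 + P) *v y"
    unfolding y_def using matrix_inv_vec_cancel(2)[OF inv] by simp
  have "(matrix_inv (mat 1 + P) ** (mat 1 - P)) *v x = (mat 1 - P) *v y"
    using matrix_inv_commute[OF inv id_diff_id_add_commute[symmetric]]
    by (simp add: y_def matrix_vector_mul_assoc)
  then show "norm ((matrix_inv (mat 1 + P) ** (mat 1 - P)) *v x) \<le> 1 * norm x"
    using norm_id_diff_le[OF assms, of y] x by simp
qed

lemma cayley_eigenvalue_le_mfun:
  fixes P Q :: "complex^'n^'n"
  assumes P: "accretive P" and Q: "accretive Q" and "x \<noteq> 0"
    and eq: "(mat 1 - Q) *v ((mat 1 - P) *v x) = \<mu> *s ((mat 1 + Q) *v ((mat 1 + P) *v x))"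
  shows "cmod \<mu> \<le> mfun Q P x"
proof -
  have inv: "invertible (mat 1 + Q)"
    using Q by (rule invertible_id_add)
  have "(matrix_inv (mat 1 + Q) ** (mat 1 - Q)) *v ((mat 1 - P) *v x) = \<mu> *s ((mat 1 + P) *v x)"
    by (simp flip: matrix_vector_mul_assoc add: eq vector_scalar_commute matrix_inv_vec_cancel[OF inv])
  then have "cmod \<mu> * norm ((mat 1 + P) *v x) \<le> fP Q * norm ((mat 1 - P) *v x)"
    using norm_cayley_le[of Q "(mat 1 - P) *v x"] by (simp add: norm_smult_complex)
  moreover have "0 < norm ((mat 1 + P) *v x)"
    using accretive_id_add_eq_0[OF P] \<open>x \<noteq> 0\<close> by auto
  ultimately show ?thesis
    unfolding mfun_eq_norm_ratio by (simp add: pos_le_divide_eq mult.commute)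
qed

lemma mfun_lt_1:
  fixes P Q :: "complex^'n^'n"
  assumes "accretive Q" "0 < inner x (P *v x)"
  shows "mfun Q P x < 1"
proof -
  have "norm ((mat 1 - P) *v x) / norm ((mat 1 + P) *v x) < 1"
    using norm_id_diff_less[OF assms(2)] by (simp add: divide_less_eq)
  moreover have "fP Q \<le> 1" "0 \<le> fP Q"
    using fP_le_1[OF assms(1)] by (simp_all add: fP_def spec_norm_def onorm_pos_le)
  ultimately show ?thesis
    unfolding mfun_eq_norm_ratio by (meson le_less_trans mult_left_le_one_le zero_le_divide_iff norm_ge_zero)
qed

lemma min_mfun_lt_1:
  fixes Q1 Q2 :: "complex^'n^'n"
  assumes "accretive Q1" "accretive Q2" "0 < inner x ((Q1 + Q2) *v x)"
  shows "min (mfun Q2 Q1 x) (mfun Q1 Q2 x) < 1"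
proof (cases "0 < inner x (Q1 *v x)")
  case True
  then show ?thesis
    using mfun_lt_1[OF assms(2)] by (simp add: min_less_iff_disj)
next
  case False
  then have "0 < inner x (Q2 *v x)"
    using assms(3) by (simp add: matrix_vector_mult_add_rdistrib inner_add_right)
  then show ?thesis
    using mfun_lt_1[OF assms(1)] by (simp add: min_less_iff_disj)
qed

lemma continuous_on_mfun:
  fixes P Q :: "complex^'n^'n"
  assumes "accretive P"
  shows "continuous_on (- {0}) (mfun Q P)"
  unfolding mfun_eq_norm_ratio[abs_def]
  using accretive_id_add_eq_0[OF assms]
  by (intro continuous_intros continuous_on_matrix_vector_mult) auto

section \<open>The PPS iteration\<close>

lemma pps_eigenvalue_le_min_mfun:
  fixes Q1 Q2 :: "complex^'n^'n"
  assumes Q1: "accretive Q1" and Q2: "accretive Q2" and "x \<noteq> 0"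
    and eig: "(matrix_inv ((mat 1 + Q2) ** (mat 1 + Q1)) ** ((mat 1 - Q2) ** (mat 1 - Q1))) *v x
      = \<mu> *s x"
    and comm: "(Q1 ** Q2) *v x = (Q2 ** Q1) *v x"
  shows "cmod \<mu> \<le> min (mfun Q2 Q1 x) (mfun Q1 Q2 x)"
proof -
  define X where "X = (mat 1 + Q2) ** (mat 1 + Q1)"
  define Y where "Y = (mat 1 - Q2) ** (mat 1 - Q1)"
  have "invertible X"
    using Q1 Q2 unfolding X_def by (simp add: invertible_mult invertible_id_add)
  then have "Y *v x = X *v ((matrix_inv X ** Y) *v x)"
    by (simp add: matrix_inv_vec_cancel(2) flip: matrix_vector_mul_assoc)
  also have "\<dots> = \<mu> *s (X *v x)"
    using eig unfolding X_def Y_def by (simp add: vector_scalar_commute)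
  finally have e21:
    "(mat 1 - Q2) *v ((mat 1 - Q1) *v x) = \<mu> *s ((mat 1 + Q2) *v ((mat 1 + Q1) *v x))"
    unfolding X_def Y_def by (simp add: matrix_vector_mul_assoc)
  moreover have "(mat 1 - Q1) *v ((mat 1 - Q2) *v x) = (mat 1 - Q2) *v ((mat 1 - Q1) *v x)"
    and "(mat 1 + Q1) *v ((mat 1 + Q2) *v x) = (mat 1 + Q2) *v ((mat 1 + Q1) *v x)"
    using comm
    by (simp_all flip: matrix_vector_mul_assoc add: matrix_vector_mult_add_rdistrib
        matrix_vector_mult_diff_rdistrib matrix_vector_right_distrib
        matrix_vector_mult_diff_distrib algebra_simps)
  ultimately have e12:
    "(mat 1 - Q1) *v ((mat 1 - Q2) *v x) = \<mu> *s ((mat 1 + Q1) *v ((mat 1 + Q2) *v x))"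
    by simp
  show ?thesis
    using cayley_eigenvalue_le_mfun[OF Q1 Q2 \<open>x \<noteq> 0\<close> e21]
      cayley_eigenvalue_le_mfun[OF Q2 Q1 \<open>x \<noteq> 0\<close> e12]
    by simp
qed

lemma pps_iteration_similar:
  fixes R P1 P2 :: "complex^'n^'n"
  defines "S \<equiv> matrix_inv R"
  defines "Q1 \<equiv> S ** P1 ** S" and "Q2 \<equiv> S ** P2 ** S"
  assumes R: "invertible R" and Q: "invertible (mat 1 + Q1)" "invertible (mat 1 + Q2)"
  shows "matrix_inv (R ** R + P1) ** (R ** R - P2) ** matrix_inv (R ** R + P2) ** (R ** R - P1)
    = S ** (matrix_inv ((mat 1 + Q2) ** (mat 1 + Q1)) ** ((mat 1 - Q2) ** (mat 1 - Q1))) ** R"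
proof -
  have cancel: "S ** (R ** Z) = Z" "R ** (S ** Z) = Z" for Z
    unfolding S_def using R by (simp_all add: matrix_mul_assoc matrix_inv_left matrix_inv_right)
  have diff: "R ** R - P1 = R ** (mat 1 - Q1) ** R" "R ** R - P2 = R ** (mat 1 - Q2) ** R"
    unfolding Q1_def Q2_def S_def using congruence_by_sqrt(2)[OF R] by auto
  have inv: "matrix_inv (R ** R + P1) = S ** matrix_inv (mat 1 + Q1) ** S"
    "matrix_inv (R ** R + P2) = S ** matrix_inv (mat 1 + Q2) ** S"
    using congruence_by_sqrt(1)[OF R] matrix_inv_congruence R Q unfolding Q1_def Q2_def S_def
    by auto
  have swap: "matrix_inv (mat 1 + Q2) ** (mat 1 - Q2) = (mat 1 - Q2) ** matrix_inv (mat 1 + Q2)"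
    using Q(2) id_diff_id_add_commute[symmetric] by (rule matrix_inv_commute)
  have "matrix_inv ((mat 1 + Q2) ** (mat 1 + Q1)) ** ((mat 1 - Q2) ** (mat 1 - Q1))
      = matrix_inv (mat 1 + Q1) ** (matrix_inv (mat 1 + Q2) ** (mat 1 - Q2)) ** (mat 1 - Q1)"
    using Q by (simp add: matrix_inv_mult matrix_mul_assoc)
  also have "\<dots> = matrix_inv (mat 1 + Q1) ** (mat 1 - Q2) ** matrix_inv (mat 1 + Q2) ** (mat 1 - Q1)"
    unfolding swap by (simp add: matrix_mul_assoc)
  finally have T: "matrix_inv ((mat 1 + Q2) ** (mat 1 + Q1)) ** ((mat 1 - Q2) ** (mat 1 - Q1))
      = matrix_inv (mat 1 + Q1) ** (mat 1 - Q2) ** matrix_inv (mat 1 + Q2) ** (mat 1 - Q1)" .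
  show ?thesis
    unfolding T inv diff by (simp add: cancel flip: matrix_mul_assoc)
qed

lemma pps_eigenvalue_bound:
  fixes \<Sigma> P1 P2 :: "complex^'n^'n"
  defines "S \<equiv> matrix_inv (hpd_sqrt \<Sigma>)"
  defines "Q1 \<equiv> S ** P1 ** S" and "Q2 \<equiv> S ** P2 ** S"
  defines "T \<equiv> matrix_inv ((mat 1 + Q2) ** (mat 1 + Q1)) ** ((mat 1 - Q2) ** (mat 1 - Q1))"
  assumes \<Sigma>: "herm_pos_def \<Sigma>" and Q: "accretive Q1" "accretive Q2"
    and comm: "\<And>x. x \<in> ev T \<Longrightarrow> (Q1 ** Q2) *v x = (Q2 ** Q1) *v x"
    and \<mu>: "\<mu> \<in> cmat_eigenvalues
      (matrix_inv (\<Sigma> + P1) ** (\<Sigma> - P2) ** matrix_inv (\<Sigma> + P2) ** (\<Sigma> - P1))"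
  shows "\<exists>x\<in>ev T. cmod \<mu> \<le> min (mfun Q2 Q1 x) (mfun Q1 Q2 x)"
proof -
  have R: "invertible (hpd_sqrt \<Sigma>)" "hpd_sqrt \<Sigma> ** hpd_sqrt \<Sigma> = \<Sigma>"
    using hpd_sqrt[OF \<Sigma>] herm_pos_def_invertible by auto
  have "\<mu> \<in> cmat_eigenvalues T"
    using \<mu> pps_iteration_similar[OF R(1)] cmat_eigenvalues_similar_subset[OF R(1)] Q
    unfolding R(2) S_def Q1_def Q2_def T_def by (auto simp: invertible_id_add)
  then obtain x where x: "x \<in> ev T" "T *v x = \<mu> *s x"
    unfolding cmat_eigenvalues_def ev_def by blast
  then have "cmod \<mu> \<le> min (mfun Q2 Q1 x) (mfun Q1 Q2 x)"
    using pps_eigenvalue_le_min_mfun[OF Q _ _ comm] unfolding T_def ev_def by blast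
  with x(1) show ?thesis
    by blast
qed

theorem corollary3p6:
  fixes A P1 P2 \<Sigma> :: "complex ^'n ^'n"
  assumes "invertible A" and "pos_def A"
    and "A = P1 + P2"
    and "pos_semidef P1" and "pos_semidef P2"
    and "herm_pos_def \<Sigma>"
    and "\<And>x. x \<in> ev (matrix_inv
            ((mat 1 + matrix_inv (hpd_sqrt \<Sigma>) ** P2 ** matrix_inv (hpd_sqrt \<Sigma>)) **
             (mat 1 + matrix_inv (hpd_sqrt \<Sigma>) ** P1 ** matrix_inv (hpd_sqrt \<Sigma>))) **
           ((mat 1 - matrix_inv (hpd_sqrt \<Sigma>) ** P2 ** matrix_inv (hpd_sqrt \<Sigma>)) **
             (mat 1 - matrix_inv (hpd_sqrt \<Sigma>) ** P1 ** matrix_inv (hpd_sqrt \<Sigma>))))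
          \<Longrightarrow> (matrix_inv (hpd_sqrt \<Sigma>) ** P1 ** matrix_inv (hpd_sqrt \<Sigma>)) **
              (matrix_inv (hpd_sqrt \<Sigma>) ** P2 ** matrix_inv (hpd_sqrt \<Sigma>)) *v x
            = (matrix_inv (hpd_sqrt \<Sigma>) ** P2 ** matrix_inv (hpd_sqrt \<Sigma>)) **
              (matrix_inv (hpd_sqrt \<Sigma>) ** P1 ** matrix_inv (hpd_sqrt \<Sigma>)) *v x"
  shows "let S = matrix_inv (hpd_sqrt \<Sigma>);
             Pt1 = S ** P1 ** S;
             Pt2 = S ** P2 ** S;
             Pplus = (mat 1 + Pt2) ** (mat 1 + Pt1);
             Pminus = (mat 1 - Pt2) ** (mat 1 - Pt1);
             \<Gamma> = matrix_inv (\<Sigma> + P1) ** (\<Sigma> - P2) ** matrix_inv (\<Sigma> + P2) ** (\<Sigma> - P1);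
             g = (\<lambda>x. min (mfun Pt2 Pt1 x) (mfun Pt1 Pt2 x))
         in \<exists>x0 \<in> ev (matrix_inv Pplus ** Pminus).
              (\<forall>x \<in> ev (matrix_inv Pplus ** Pminus). g x \<le> g x0) \<and>
              spec_radius \<Gamma> \<le> g x0 \<and> g x0 < 1"
proof -
  let ?S = "matrix_inv (hpd_sqrt \<Sigma>)"
  let ?Q1 = "?S ** P1 ** ?S" and ?Q2 = "?S ** P2 ** ?S"
  let ?T = "matrix_inv ((mat 1 + ?Q2) ** (mat 1 + ?Q1)) ** ((mat 1 - ?Q2) ** (mat 1 - ?Q1))"
  let ?g = "\<lambda>x. min (mfun ?Q2 ?Q1 x) (mfun ?Q1 ?Q2 x)"
  note S = hpd_sqrt_inverse[OF assms(6)]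
  have Q: "accretive ?Q1" "accretive ?Q2"
    using assms(4,5) by (simp_all add: accretive_congruence[OF S(1)] pos_semidef_imp_accretive)
  obtain x0 where x0: "x0 \<in> ev ?T" and x0_max: "\<forall>x\<in>ev ?T. ?g x \<le> ?g x0"
    using ev_attains_max[of ?g ?T] Q
    by (auto simp: mfun_scaleR intro: continuous_on_min continuous_on_mfun)
  have "spec_radius (matrix_inv (\<Sigma> + P1) ** (\<Sigma> - P2) ** matrix_inv (\<Sigma> + P2) ** (\<Sigma> - P1))
      \<le> ?g x0"
    using pps_eigenvalue_bound[OF assms(6) Q assms(7)] x0_max
    by (intro spec_radius_le) (meson order_trans)
  moreover have "?g x0 < 1"
    using min_mfun_lt_1[OF Q] pos_def_congruence[OF assms(2) S] x0
    unfolding matrix_congruence_add assms(3) ev_def by blast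
  ultimately show ?thesis
    using x0 x0_max unfolding Let_def by blast
qed

end
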